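(* Let $K\subset\mathbb{R}^{n+m}$ be a convex body and fix $u\in W$. The following are equivalent: (1) $\Sigma_\pi K$ is strictly convex in direction $u$; (2) for almost every $x\in\pi(K)$ the fiber $K_x$ is strictly convex in direction $u$.
   Context: A convex body is a non-empty compact convex subset of a real vector space; its support function is $h_L(u)=\max\{\langle u,x\rangle : x\in L\}$, and its face in direction $u$ is $L^u:=\{y\in L:\langle u,y\rangle=h_L(u)\}$. $L$ is strictly convex in direction $u$ if $L^u$ consists of a single point. Let $V\subset\mathbb{R}^{n+m}$ be a linear subspace of dimension $n$, $W=V^\perp$, $\pi:\mathbb{R}^{n+m}\to V$ the orthogonal projection. For $x\in\pi(K)$ let $K_x:=\{y\in W : x+y\in K\}$. A section is a map $\gamma:\pi(K)\to W$ with $\gamma(x)\in K_x$ for all $x$; measurable means Borel measurable. The fiber body is $\Sigma_\pi K:=\{\int_{\pi(K)}\gamma(x)\,\mathrm{d}x : \gamma \text{ measurable section}\}\subset W$, with $\mathrm{d}x$ Lebesgue measure on $V$; "almost every" refers to Lebesgue measure on $V$. *)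

theory Defs
  imports "HOL-Analysis.Analysis"
begin

text \<open>Ambient space R^(n+m) is modelled as the product 'v \<times> 'w of two Euclidean
spaces, with V = 'v \<times> {0} (dimension n = DIM('v)) and W = V^\<bottom> = {0} \<times> 'w.
The orthogonal projection onto V is fst, and W is identified with 'w.\<close>

definition convex_body :: "'a::euclidean_space set \<Rightarrow> bool" where
  "convex_body L \<longleftrightarrow> L \<noteq> {} \<and> compact L \<and> convex L"

definition support_fun :: "'a::euclidean_space set \<Rightarrow> 'a \<Rightarrow> real" where
  "support_fun L u = (SUP x\<in>L. u \<bullet> x)"

definition face :: "'a::euclidean_space set \<Rightarrow> 'a \<Rightarrow> 'a set" where
  "face L u = {y \<in> L. u \<bullet> y = support_fun L u}"

definition strictly_convex_in_direction :: "'a::euclidean_space set \<Rightarrow> 'a \<Rightarrow> bool" where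
  "strictly_convex_in_direction L u \<longleftrightarrow> (\<exists>y. face L u = {y})"

definition fiber :: "('v::euclidean_space \<times> 'w::euclidean_space) set \<Rightarrow> 'v \<Rightarrow> 'w set" where
  "fiber K x = {y. (x, y) \<in> K}"

definition measurable_section ::
  "('v::euclidean_space \<times> 'w::euclidean_space) set \<Rightarrow> ('v \<Rightarrow> 'w) \<Rightarrow> bool" where
  "measurable_section K \<gamma> \<longleftrightarrow>
     \<gamma> \<in> borel_measurable (restrict_space borel (fst ` K)) \<and>
     (\<forall>x\<in>fst ` K. \<gamma> x \<in> fiber K x)"

definition fiber_body :: "('v::euclidean_space \<times> 'w::euclidean_space) set \<Rightarrow> 'w set" where
  "fiber_body K = {(LINT x:(fst ` K)|lborel. \<gamma> x) | \<gamma>. measurable_section K \<gamma>}"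

end

theory Submission
  imports Defs
begin

text \<open>Call the fiberwise face of K in direction u the set of (x, y) \<in> K such that y lies in
  the face of the fiber K x in direction u. A section \<gamma> maximizes u \<bullet> \<integral>\<gamma> iff u \<bullet> \<gamma>(x) is
  maximal for almost every x, and it can then be changed on a null set to take values in the
  fiberwise face; hence the face of the fiber body in direction u is the fiber body of the
  fiberwise face. It remains to show that a fiber body is a point iff almost all fibers are
  points. If it is a point, then for each basis vector b the sections maximizing and minimizing
  b \<bullet> y fiberwise have equal integrals, so they agree in direction b almost everywhere, which
  pins down almost every fiber. Conversely, sections of almost everywhere singleton fibers
  agree almost everywhere. Measurable sections exist because maximizing successively along a
  basis leaves a single point in each fiber, with measurable coordinates.\<close>

lemma support_fun_face_of_maximizer:
  assumes "y \<in> L" "\<And>z. z \<in> L \<Longrightarrow> u \<bullet> z \<le> u \<bullet> y"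
  shows "support_fun L u = u \<bullet> y" and "face L u = {z \<in> L. u \<bullet> z = u \<bullet> y}"
proof -
  show "support_fun L u = u \<bullet> y"
    unfolding support_fun_def using assms by (intro cSup_eq_maximum) auto
  then show "face L u = {z \<in> L. u \<bullet> z = u \<bullet> y}"
    by (simp add: face_def)
qed

lemma compact_obtains_maximizer:
  assumes "compact L" "L \<noteq> {}"
  obtains y where "y \<in> L" "\<And>z. z \<in> L \<Longrightarrow> u \<bullet> z \<le> u \<bullet> y"
proof -
  have "continuous_on L (\<lambda>y. u \<bullet> y)"
    by (intro continuous_intros)
  then show ?thesis
    using continuous_attains_sup[OF assms] that by blast
qed

lemma face_compact_nonempty:
  assumes "compact L" "L \<noteq> {}"
  shows "face L u \<noteq> {}"
  using assms by (metis (mono_tags, lifting) compact_obtains_maximizer empty_iff mem_Collect_eq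
      support_fun_face_of_maximizer(2))

lemma support_fun_ge_iff:
  assumes "compact L" "L \<noteq> {}"
  shows "c \<le> support_fun L u \<longleftrightarrow> (\<exists>y\<in>L. c \<le> u \<bullet> y)"
proof -
  obtain y where "y \<in> L" "\<And>z. z \<in> L \<Longrightarrow> u \<bullet> z \<le> u \<bullet> y"
    using compact_obtains_maximizer[OF assms] by blast
  then show ?thesis
    using support_fun_face_of_maximizer(1)[of y L u] by (auto intro: order_trans)
qed

lemma face_maximizes:
  assumes "compact L" "y \<in> face L u" "z \<in> L"
  shows "u \<bullet> z \<le> u \<bullet> y"
  using assms support_fun_ge_iff[of L "u \<bullet> z" u] by (auto simp: face_def)

lemma compact_face:
  assumes "compact L"
  shows "compact (face L u)"
proof -
  have "face L u = L \<inter> {y. u \<bullet> y = support_fun L u}"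
    by (auto simp: face_def)
  then show ?thesis
    using assms by (simp add: compact_Int_closed closed_hyperplane)
qed

definition compact_fibers :: "('v::euclidean_space \<times> 'w::euclidean_space) set \<Rightarrow> bool" where
  "compact_fibers G \<longleftrightarrow> (\<forall>x. compact (fiber G x))"

definition hit_measurable :: "('v::euclidean_space \<times> 'w::euclidean_space) set \<Rightarrow> bool" where
  "hit_measurable G \<longleftrightarrow> (\<forall>C. compact C \<longrightarrow> {x. fiber G x \<inter> C \<noteq> {}} \<in> sets borel)"

definition fiberwise_face ::
    "('v::euclidean_space \<times> 'w::euclidean_space) set \<Rightarrow> 'w \<Rightarrow> ('v \<times> 'w) set" where
  "fiberwise_face G e = {p \<in> G. snd p \<in> face (fiber G (fst p)) e}"

lemma fiber_fiberwise_face [simp]: "fiber (fiberwise_face G e) x = face (fiber G x) e"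
  by (auto simp: fiber_def fiberwise_face_def face_def)

lemma fiberwise_face_subset: "fiberwise_face G e \<subseteq> G"
  by (auto simp: fiberwise_face_def)

lemma fst_fiberwise_face:
  assumes "compact_fibers G"
  shows "fst ` fiberwise_face G e = fst ` G"
proof
  show "fst ` G \<subseteq> fst ` fiberwise_face G e"
  proof
    fix x assume "x \<in> fst ` G"
    then have "fiber G x \<noteq> {}"
      by (force simp: fiber_def)
    then obtain y where "y \<in> face (fiber G x) e"
      using face_compact_nonempty assms by (metis compact_fibers_def ex_in_conv)
    then show "x \<in> fst ` fiberwise_face G e"
      using fiber_fiberwise_face by (force simp: fiber_def)
  qed
qed (auto simp: fiberwise_face_def)

lemma compact_fibers_fiberwise_face: "compact_fibers G \<Longrightarrow> compact_fibers (fiberwise_face G e)"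
  by (simp add: compact_fibers_def compact_face)

lemma fiber_Int_Times [simp]: "fiber (G \<inter> UNIV \<times> C) x = fiber G x \<inter> C"
  by (auto simp: fiber_def)

lemma compact_fibers_Int_Times: "compact_fibers G \<Longrightarrow> compact C \<Longrightarrow> compact_fibers (G \<inter> UNIV \<times> C)"
  by (simp add: compact_fibers_def compact_Int)

lemma hit_measurable_Int_Times: "hit_measurable G \<Longrightarrow> compact C \<Longrightarrow> hit_measurable (G \<inter> UNIV \<times> C)"
  unfolding hit_measurable_def fiber_Int_Times Int_assoc by (blast intro: compact_Int)

lemma hit_measurable_closed:
  assumes "hit_measurable G" "closed C"
  shows "{x. fiber G x \<inter> C \<noteq> {}} \<in> sets borel"
proof -
  have "{x. fiber G x \<inter> C \<noteq> {}} = (\<Union>n::nat. {x. fiber G x \<inter> (C \<inter> cball 0 (real n)) \<noteq> {}})"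
  proof (intro equalityI subsetI)
    fix x assume "x \<in> {x. fiber G x \<inter> C \<noteq> {}}"
    then obtain y where "y \<in> fiber G x" "y \<in> C"
      by blast
    moreover obtain n :: nat where "norm y \<le> real n"
      using real_arch_simple by blast
    ultimately have "fiber G x \<inter> (C \<inter> cball 0 (real n)) \<noteq> {}"
      by (auto simp: mem_cball_0)
    then show "x \<in> (\<Union>n::nat. {x. fiber G x \<inter> (C \<inter> cball 0 (real n)) \<noteq> {}})"
      by blast
  qed blast
  also have "\<dots> \<in> sets borel"
    using assms unfolding hit_measurable_def
    by (intro sets.countable_nat_UN) (auto simp: closed_Int_compact)
  finally show ?thesis .
qed

lemma borel_measurable_support_fun_fiber:
  assumes "hit_measurable G" "compact_fibers G"
  shows "(\<lambda>x. support_fun (fiber G x) e) \<in> borel_measurable borel"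
proof (rule borel_measurableI_ge)
  txt \<open>On empty fibers the function takes the junk value support_fun {} e.\<close>
  fix c
  have "c \<le> support_fun (fiber G x) e \<longleftrightarrow>
      fiber G x \<inter> {y. c \<le> e \<bullet> y} \<noteq> {} \<or> (fiber G x = {} \<and> c \<le> support_fun {} e)" for x
    using support_fun_ge_iff[of "fiber G x" c e] assms(2)
    by (cases "fiber G x = {}") (auto simp: compact_fibers_def)
  then have "{x \<in> space borel. c \<le> support_fun (fiber G x) e} =
      {x. fiber G x \<inter> {y. c \<le> e \<bullet> y} \<noteq> {}} \<union>
      (if c \<le> support_fun {} e then {x. fiber G x = {}} else {})"
    by auto
  also have "\<dots> \<in> sets borel"
  proof -
    have "- {x. fiber G x \<inter> UNIV \<noteq> {}} \<in> sets borel"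
      using hit_measurable_closed[OF assms(1) closed_UNIV] by (rule borel_comp)
    then have "{x. fiber G x = {}} \<in> sets borel"
      by (simp add: Compl_eq)
    then show ?thesis
      using hit_measurable_closed[OF assms(1) closed_halfspace_ge] by auto
  qed
  finally show "{x \<in> space borel. c \<le> support_fun (fiber G x) e} \<in> sets borel" .
qed

text \<open>The face of a fiber meets C iff the support value of the fiber truncated to C reaches
  that of the whole fiber.\<close>
lemma hit_measurable_fiberwise_face:
  assumes "hit_measurable G" "compact_fibers G"
  shows "hit_measurable (fiberwise_face G e)"
  unfolding hit_measurable_def
proof (intro allI impI)
  fix C :: "'b set" assume C: "compact C"
  let ?h = "\<lambda>H x. support_fun (fiber H x) e"
  have "{x. face (fiber G x) e \<inter> C \<noteq> {}} =
      {x. fiber G x \<inter> C \<noteq> {}} \<inter> {x \<in> space borel. ?h G x \<le> ?h (G \<inter> UNIV \<times> C) x}"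
  proof (intro equalityI subsetI)
    fix x assume "x \<in> {x. face (fiber G x) e \<inter> C \<noteq> {}}"
    then obtain y where y: "y \<in> fiber G x" "y \<in> C" "e \<bullet> y = ?h G x"
      by (auto simp: face_def)
    moreover have "compact (fiber G x \<inter> C)"
      using assms(2) C by (auto simp: compact_fibers_def compact_Int)
    ultimately have "?h G x \<le> ?h (G \<inter> UNIV \<times> C) x"
      using support_fun_ge_iff[of "fiber G x \<inter> C" "?h G x" e]
      by (metis fiber_Int_Times IntI empty_iff order.refl)
    with y show "x \<in> {x. fiber G x \<inter> C \<noteq> {}} \<inter> {x \<in> space borel. ?h G x \<le> ?h (G \<inter> UNIV \<times> C) x}"
      by auto
  next
    fix x assume x: "x \<in> {x. fiber G x \<inter> C \<noteq> {}} \<inter> {x \<in> space borel. ?h G x \<le> ?h (G \<inter> UNIV \<times> C) x}"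
    have cpt: "compact (fiber G x \<inter> C)" "compact (fiber G x)"
      using assms(2) C by (auto simp: compact_fibers_def compact_Int)
    obtain y where y: "y \<in> fiber G x \<inter> C" "\<And>z. z \<in> fiber G x \<inter> C \<Longrightarrow> e \<bullet> z \<le> e \<bullet> y"
      using compact_obtains_maximizer[OF cpt(1)] x by blast
    have "?h G x \<le> e \<bullet> y"
      using x support_fun_face_of_maximizer(1)[OF y] by simp
    moreover have "e \<bullet> y \<le> ?h G x"
      using support_fun_ge_iff[OF cpt(2)] y(1) by blast
    ultimately show "x \<in> {x. face (fiber G x) e \<inter> C \<noteq> {}}"
      using y(1) by (auto simp: face_def)
  qed
  also have "\<dots> \<in> sets borel"
    using assms C hit_measurable_Int_Times[OF assms(1) C] compact_fibers_Int_Times[OF assms(2) C]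
    by (intro sets.Int borel_measurable_le borel_measurable_support_fun_fiber)
      (auto simp: hit_measurable_def)
  finally show "{x. fiber (fiberwise_face G e) x \<inter> C \<noteq> {}} \<in> sets borel"
    by simp
qed

lemma compact_fibers_compact: "compact K \<Longrightarrow> compact_fibers K"
  unfolding compact_fibers_def
proof
  fix x assume "compact K"
  moreover have "fiber K x = snd ` (K \<inter> {x} \<times> UNIV)"
    by (force simp: fiber_def)
  ultimately show "compact (fiber K x)"
    by (auto intro!: compact_continuous_image continuous_intros compact_Int_closed closed_Times)
qed

lemma hit_measurable_compact: "compact K \<Longrightarrow> hit_measurable K"
  unfolding hit_measurable_def
proof (intro allI impI)
  fix C :: "'b set" assume "compact K" "compact C"
  then have "compact (fst ` (K \<inter> UNIV \<times> C))"
    by (intro compact_continuous_image continuous_intros compact_Int_closed closed_Times)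
      (auto simp: compact_imp_closed)
  moreover have "{x. fiber K x \<inter> C \<noteq> {}} = fst ` (K \<inter> UNIV \<times> C)"
    by (force simp: fiber_def)
  ultimately show "{x. fiber K x \<inter> C \<noteq> {}} \<in> sets borel"
    by (simp add: borel_compact)
qed

primrec lex_face ::
    "'w list \<Rightarrow> ('v::euclidean_space \<times> 'w::euclidean_space) set \<Rightarrow> ('v \<times> 'w) set" where
  "lex_face [] G = G"
| "lex_face (e # es) G = lex_face es (fiberwise_face G e)"

lemma lex_face_subset: "lex_face es G \<subseteq> G"
  by (induction es arbitrary: G) (simp_all, meson fiberwise_face_subset order_trans)

lemma fst_lex_face: "compact_fibers G \<Longrightarrow> fst ` lex_face es G = fst ` G"
  by (induction es arbitrary: G) (auto simp: compact_fibers_fiberwise_face fst_fiberwise_face)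

lemma inner_lex_face_measurable:
  assumes "hit_measurable G" "compact_fibers G" "e \<in> set es"
  shows "\<exists>f\<in>borel_measurable borel. \<forall>p\<in>lex_face es G. e \<bullet> snd p = f (fst p)"
  using assms
proof (induction es arbitrary: G)
  case (Cons e' es)
  show ?case
  proof (cases "e = e'")
    case True
    have "e \<bullet> snd p = support_fun (fiber G (fst p)) e" if "p \<in> lex_face (e' # es) G" for p
    proof -
      have "p \<in> fiberwise_face G e"
        using that lex_face_subset True by auto
      then show ?thesis
        by (simp add: fiberwise_face_def face_def)
    qed
    then show ?thesis
      using borel_measurable_support_fun_fiber[OF Cons.prems(1,2)]
      by (intro bexI[where x = "\<lambda>x. support_fun (fiber G x) e"]) auto
  next
    case False
    then show ?thesis
      using Cons by (simp add: compact_fibers_fiberwise_face hit_measurable_fiberwise_face)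
  qed
qed simp

lemma measurable_selection:
  fixes G :: "('v::euclidean_space \<times> 'w::euclidean_space) set"
  assumes "hit_measurable G" "compact_fibers G"
  obtains \<gamma> where "\<gamma> \<in> borel_measurable borel" "\<And>x. x \<in> fst ` G \<Longrightarrow> (x, \<gamma> x) \<in> G"
proof -
  obtain es :: "'w list" where es: "set es = Basis"
    using finite_list[OF finite_Basis] by blast
  let ?R = "lex_face es G"
  have "\<forall>b\<in>Basis. \<exists>f. f \<in> borel_measurable borel \<and> (\<forall>p\<in>?R. b \<bullet> snd p = f (fst p))"
    using inner_lex_face_measurable[OF assms] es by blast
  then obtain f where "\<forall>b\<in>Basis. f b \<in> borel_measurable borel \<and> (\<forall>p\<in>?R. b \<bullet> snd p = f b (fst p))"
    by (metis (no_types) bchoice)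
  then have f: "\<And>b. b \<in> Basis \<Longrightarrow> f b \<in> borel_measurable borel"
    "\<And>b p. b \<in> Basis \<Longrightarrow> p \<in> ?R \<Longrightarrow> b \<bullet> snd p = f b (fst p)"
    by auto
  define \<gamma> where "\<gamma> x = (\<Sum>b\<in>Basis. f b x *\<^sub>R b)" for x
  have "\<gamma> \<in> borel_measurable borel"
    unfolding \<gamma>_def
    by (intro borel_measurable_sum borel_measurable_scaleR f(1) borel_measurable_const)
  moreover have "(x, \<gamma> x) \<in> G" if x: "x \<in> fst ` G" for x
  proof -
    obtain y where y: "(x, y) \<in> ?R"
      using x fst_lex_face[OF assms(2), of es] by force
    have "y = (\<Sum>b\<in>Basis. (y \<bullet> b) *\<^sub>R b)"
      by (rule euclidean_representation[symmetric])
    also have "\<dots> = \<gamma> x"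
      unfolding \<gamma>_def using f(2)[OF _ y] by (intro sum.cong) (auto simp: inner_commute)
    finally show ?thesis
      using y lex_face_subset by blast
  qed
  ultimately show ?thesis
    using that by blast
qed

lemma set_integral_inner_right:
  fixes f :: "'a \<Rightarrow> 'b::euclidean_space"
  assumes "set_integrable M A f"
  shows "set_integrable M A (\<lambda>x. c \<bullet> f x)"
    and "(LINT x:A|M. c \<bullet> f x) = c \<bullet> (LINT x:A|M. f x)"
  using assms integrable_inner_right[of c M "\<lambda>x. indicator A x *\<^sub>R f x"]
    integral_inner_right[of c M "\<lambda>x. indicator A x *\<^sub>R f x"]
  by (simp_all add: set_integrable_def set_lebesgue_integral_def)

lemma set_integral_nonneg_eq_0_AE:
  fixes f :: "'a \<Rightarrow> real"
  assumes "set_integrable M A f" "\<And>x. x \<in> A \<Longrightarrow> 0 \<le> f x" "(LINT x:A|M. f x) = 0"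
  shows "AE x in M. x \<in> A \<longrightarrow> f x = 0"
proof -
  have "AE x in M. indicator A x * f x = 0"
    using assms integral_nonneg_eq_0_iff_AE[of M "\<lambda>x. indicator A x * f x"]
    by (auto simp: set_integrable_def set_lebesgue_integral_def indicator_def)
  then show ?thesis
    by (rule eventually_mono) (simp add: indicator_def)
qed

lemma measurable_sectionI:
  assumes "\<gamma> \<in> borel_measurable borel" "\<And>x. x \<in> fst ` G \<Longrightarrow> (x, \<gamma> x) \<in> G"
  shows "measurable_section G \<gamma>"
  using assms by (auto simp: measurable_section_def fiber_def intro: measurable_restrict_space1)

lemma measurable_section_mono:
  assumes "measurable_section F \<gamma>" "F \<subseteq> G" "fst ` F = fst ` G"
  shows "measurable_section G \<gamma>"
  using assms by (auto simp: measurable_section_def fiber_def)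

lemma fiber_body_nonempty:
  assumes "hit_measurable G" "compact_fibers G"
  shows "fiber_body G \<noteq> {}"
proof -
  obtain \<gamma> where "\<gamma> \<in> borel_measurable borel" "\<And>x. x \<in> fst ` G \<Longrightarrow> (x, \<gamma> x) \<in> G"
    using measurable_selection[OF assms] by blast
  then show ?thesis
    by (auto simp: fiber_body_def intro: measurable_sectionI)
qed

lemma fiberwise_face_section_exists:
  assumes "hit_measurable G" "compact_fibers G"
  obtains \<gamma> where "measurable_section (fiberwise_face G e) \<gamma>"
  using measurable_selection[OF hit_measurable_fiberwise_face[OF assms, of e]
      compact_fibers_fiberwise_face[OF assms(2)]] measurable_sectionI by metis

lemma measurable_section_fiberwise_face_imp:
  "compact_fibers G \<Longrightarrow> measurable_section (fiberwise_face G e) \<gamma> \<Longrightarrow> measurable_section G \<gamma>"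
  using fiberwise_face_subset fst_fiberwise_face by (blast intro: measurable_section_mono)

lemma measurable_section_fiberwise_face_in_face:
  assumes "compact_fibers G" "measurable_section (fiberwise_face G e) \<gamma>" "x \<in> fst ` G"
  shows "\<gamma> x \<in> face (fiber G x) e"
  using assms fst_fiberwise_face[OF assms(1)] by (auto simp: measurable_section_def)

context
  fixes G :: "('v::euclidean_space \<times> 'w::euclidean_space) set"
  assumes bounded: "bounded G" and fst_borel: "fst ` G \<in> sets borel"
begin

lemma set_integrable_section:
  assumes "measurable_section G \<gamma>"
  shows "set_integrable lborel (fst ` G) \<gamma>"
proof -
  obtain B where B: "\<And>p. p \<in> G \<Longrightarrow> norm p \<le> B"
    using bounded by (auto simp: bounded_iff)
  have "emeasure lborel (fst ` G) < \<infinity>"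
    using bounded by (intro emeasure_bounded_finite bounded_linear_image bounded_linear_fst)
  then have "set_integrable lborel (fst ` G) (\<lambda>_. B)"
    using fst_borel by (simp add: set_integrable_def)
  moreover have "set_borel_measurable lborel (fst ` G) \<gamma>"
    using assms fst_borel
    by (simp add: measurable_section_def borel_measurable_restrict_space_iff
        set_borel_measurable_def)
  moreover have "norm (\<gamma> x) \<le> norm B" if "x \<in> fst ` G" for x
  proof -
    have "(x, \<gamma> x) \<in> G"
      using assms that by (auto simp: measurable_section_def fiber_def)
    then show ?thesis
      using B norm_snd_le[of "\<gamma> x" x] by (metis abs_ge_self order_trans real_norm_def)
  qed
  then have "AE x in lborel. x \<in> fst ` G \<longrightarrow> norm (\<gamma> x) \<le> norm B"
    by (intro AE_I2) blast
  ultimately show ?thesis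
    by (rule set_integrable_bound)
qed

lemma inner_integral_section_mono:
  assumes "measurable_section G \<gamma>1" "measurable_section G \<gamma>2"
    and "\<And>x. x \<in> fst ` G \<Longrightarrow> c \<bullet> \<gamma>1 x \<le> c \<bullet> \<gamma>2 x"
  shows "c \<bullet> (LINT x:fst ` G|lborel. \<gamma>1 x) \<le> c \<bullet> (LINT x:fst ` G|lborel. \<gamma>2 x)"
proof -
  note int = set_integral_inner_right[OF set_integrable_section[OF assms(1)], of c]
    set_integral_inner_right[OF set_integrable_section[OF assms(2)], of c]
  show ?thesis
    using set_integral_mono[OF int(1) int(3) assms(3)] int(2,4) by simp
qed

lemma AE_inner_eq_if_integral_eq:
  assumes "measurable_section G \<gamma>1" "measurable_section G \<gamma>2"
    and "\<And>x. x \<in> fst ` G \<Longrightarrow> c \<bullet> \<gamma>1 x \<le> c \<bullet> \<gamma>2 x"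
    and "c \<bullet> (LINT x:fst ` G|lborel. \<gamma>1 x) = c \<bullet> (LINT x:fst ` G|lborel. \<gamma>2 x)"
  shows "AE x in lborel. x \<in> fst ` G \<longrightarrow> c \<bullet> \<gamma>1 x = c \<bullet> \<gamma>2 x"
proof -
  note int = set_integral_inner_right[OF set_integrable_section[OF assms(1)], of c]
    set_integral_inner_right[OF set_integrable_section[OF assms(2)], of c]
  have "AE x in lborel. x \<in> fst ` G \<longrightarrow> c \<bullet> \<gamma>2 x - c \<bullet> \<gamma>1 x = 0"
    using assms(3,4) int by (intro set_integral_nonneg_eq_0_AE) auto
  then show ?thesis
    by (rule eventually_mono) simp
qed

lemma integral_section_cong_AE:
  assumes "measurable_section G \<gamma>1" "measurable_section G \<gamma>2"
    and "AE x in lborel. x \<in> fst ` G \<longrightarrow> \<gamma>1 x = \<gamma>2 x"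
  shows "(LINT x:fst ` G|lborel. \<gamma>1 x) = (LINT x:fst ` G|lborel. \<gamma>2 x)"
proof -
  have "AE x in lborel. indicator (fst ` G) x *\<^sub>R \<gamma>1 x = indicator (fst ` G) x *\<^sub>R \<gamma>2 x"
    using assms(3) by (rule eventually_mono) (auto simp: indicator_def)
  then show ?thesis
    using set_integrable_section[OF assms(1)] set_integrable_section[OF assms(2)]
    unfolding set_lebesgue_integral_def set_integrable_def
    by (intro integral_cong_AE borel_measurable_integrable)
qed

end

lemma sets_borel_fst_compact:
  fixes K :: "('v::euclidean_space \<times> 'w::euclidean_space) set"
  assumes "compact K"
  shows "fst ` K \<in> sets borel"
proof -
  have "compact (fst ` K)"
    using assms by (intro compact_continuous_image continuous_intros)
  then show ?thesis
    by (simp add: borel_compact)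
qed

context
  fixes K :: "('v::euclidean_space \<times> 'w::euclidean_space) set" and u :: 'w and \<gamma>0 :: "'v \<Rightarrow> 'w"
  assumes bounded: "bounded K" and fst_borel: "fst ` K \<in> sets borel"
    and cfib: "compact_fibers K" and section0: "measurable_section (fiberwise_face K u) \<gamma>0"
begin

lemma fiberwise_face_section_maximal:
  assumes "measurable_section K \<gamma>" "x \<in> fst ` K"
  shows "u \<bullet> \<gamma> x \<le> u \<bullet> \<gamma>0 x"
proof (rule face_maximizes)
  show "compact (fiber K x)"
    using cfib by (simp add: compact_fibers_def)
  show "\<gamma>0 x \<in> face (fiber K x) u"
    using cfib section0 assms(2) by (rule measurable_section_fiberwise_face_in_face)
  show "\<gamma> x \<in> fiber K x"
    using assms by (auto simp: measurable_section_def)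
qed

lemma inner_integral_le_fiberwise_face_section:
  assumes "measurable_section K \<gamma>"
  shows "u \<bullet> (LINT x:fst ` K|lborel. \<gamma> x) \<le> u \<bullet> (LINT x:fst ` K|lborel. \<gamma>0 x)"
  using assms measurable_section_fiberwise_face_imp[OF cfib section0] fiberwise_face_section_maximal
  by (intro inner_integral_section_mono[OF bounded fst_borel])

lemma face_fiber_body_level:
  "face (fiber_body K) u = {z \<in> fiber_body K. u \<bullet> z = u \<bullet> (LINT x:fst ` K|lborel. \<gamma>0 x)}"
proof (rule support_fun_face_of_maximizer(2))
  show "(LINT x:fst ` K|lborel. \<gamma>0 x) \<in> fiber_body K"
    using measurable_section_fiberwise_face_imp[OF cfib section0] by (auto simp: fiber_body_def)
  show "u \<bullet> z \<le> u \<bullet> (LINT x:fst ` K|lborel. \<gamma>0 x)" if "z \<in> fiber_body K" for z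
    using that inner_integral_le_fiberwise_face_section by (auto simp: fiber_body_def)
qed

lemma fiber_body_fiberwise_face_subset_face:
  "fiber_body (fiberwise_face K u) \<subseteq> face (fiber_body K) u"
proof
  fix z assume "z \<in> fiber_body (fiberwise_face K u)"
  then obtain \<gamma> where s: "measurable_section (fiberwise_face K u) \<gamma>"
    and z: "z = (LINT x:fst ` K|lborel. \<gamma> x)"
    using fst_fiberwise_face[OF cfib] by (auto simp: fiber_body_def)
  have sK: "measurable_section K \<gamma>"
    using cfib s by (rule measurable_section_fiberwise_face_imp)
  have "u \<bullet> \<gamma>0 x \<le> u \<bullet> \<gamma> x" if "x \<in> fst ` K" for x
  proof (rule face_maximizes)
    show "compact (fiber K x)"
      using cfib by (simp add: compact_fibers_def)
    show "\<gamma> x \<in> face (fiber K x) u"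
      using cfib s that by (rule measurable_section_fiberwise_face_in_face)
    show "\<gamma>0 x \<in> fiber K x"
      using measurable_section_fiberwise_face_in_face[OF cfib section0 that] by (simp add: face_def)
  qed
  then have "u \<bullet> (LINT x:fst ` K|lborel. \<gamma>0 x) \<le> u \<bullet> z"
    unfolding z using sK measurable_section_fiberwise_face_imp[OF cfib section0]
    by (intro inner_integral_section_mono[OF bounded fst_borel])
  moreover have "u \<bullet> z \<le> u \<bullet> (LINT x:fst ` K|lborel. \<gamma>0 x)" "z \<in> fiber_body K"
    using sK inner_integral_le_fiberwise_face_section z by (auto simp: fiber_body_def)
  ultimately show "z \<in> face (fiber_body K) u"
    using face_fiber_body_level by auto
qed

lemma face_subset_fiber_body_fiberwise_face:
  "face (fiber_body K) u \<subseteq> fiber_body (fiberwise_face K u)"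
proof
  let ?P = "fst ` K" and ?I = "\<lambda>\<gamma>. LINT x:fst ` K|lborel. \<gamma> x"
  have s0: "measurable_section K \<gamma>0"
    using cfib section0 by (rule measurable_section_fiberwise_face_imp)
  fix z assume "z \<in> face (fiber_body K) u"
  then obtain \<gamma> where s: "measurable_section K \<gamma>" and z: "z = ?I \<gamma>"
    and eq: "u \<bullet> ?I \<gamma> = u \<bullet> ?I \<gamma>0"
    using face_fiber_body_level by (auto simp: fiber_body_def)
  have ae: "AE x in lborel. x \<in> ?P \<longrightarrow> u \<bullet> \<gamma> x = u \<bullet> \<gamma>0 x"
    using s s0 eq fiberwise_face_section_maximal
    by (intro AE_inner_eq_if_integral_eq[OF bounded fst_borel])
  txt \<open>\<gamma> lies in the fiberwise faces except on a null set, where it is replaced by \<gamma>0.\<close>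
  define \<gamma>' where "\<gamma>' x = (if u \<bullet> \<gamma> x = u \<bullet> \<gamma>0 x then \<gamma> x else \<gamma>0 x)" for x
  have [measurable]: "\<gamma> \<in> borel_measurable (restrict_space borel ?P)"
    "\<gamma>0 \<in> borel_measurable (restrict_space borel ?P)"
    using s s0 by (auto simp: measurable_section_def)
  have "\<gamma>' \<in> borel_measurable (restrict_space borel ?P)"
    unfolding \<gamma>'_def by measurable
  moreover have "\<gamma>' x \<in> face (fiber K x) u" if "x \<in> ?P" for x
    using measurable_section_fiberwise_face_in_face[OF cfib section0 that] s that
    by (auto simp: \<gamma>'_def face_def measurable_section_def)
  ultimately have s': "measurable_section (fiberwise_face K u) \<gamma>'"
    using fst_fiberwise_face[OF cfib] by (simp add: measurable_section_def)
  have "AE x in lborel. x \<in> ?P \<longrightarrow> \<gamma>' x = \<gamma> x"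
    using ae by (rule eventually_mono) (simp add: \<gamma>'_def)
  then have "?I \<gamma>' = ?I \<gamma>"
    using s measurable_section_fiberwise_face_imp[OF cfib s']
    by (intro integral_section_cong_AE[OF bounded fst_borel])
  then show "z \<in> fiber_body (fiberwise_face K u)"
    using z s' fst_fiberwise_face[OF cfib] by (auto simp: fiber_body_def intro!: exI[where x = \<gamma>'])
qed

end

lemma face_fiber_body:
  assumes "bounded K" "fst ` K \<in> sets borel" "hit_measurable K" "compact_fibers K"
  shows "face (fiber_body K) u = fiber_body (fiberwise_face K u)"
proof -
  obtain \<gamma>0 where "measurable_section (fiberwise_face K u) \<gamma>0"
    using fiberwise_face_section_exists[OF assms(3,4)] by blast
  with assms show ?thesis
    using face_subset_fiber_body_fiberwise_face fiber_body_fiberwise_face_subset_face by blast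
qed

context
  fixes G :: "('v::euclidean_space \<times> 'w::euclidean_space) set"
  assumes bounded: "bounded G" and fst_borel: "fst ` G \<in> sets borel"
    and hit: "hit_measurable G" and cfib: "compact_fibers G"
begin

lemma AE_inner_constant_on_fibers:
  assumes "\<exists>z. fiber_body G = {z}"
  shows "AE x in lborel. x \<in> fst ` G \<longrightarrow> (\<forall>y\<in>fiber G x. \<forall>y'\<in>fiber G x. c \<bullet> y = c \<bullet> y')"
proof -
  have fiber_compact: "compact (fiber G x)" for x
    using cfib by (simp add: compact_fibers_def)
  have face_section: "\<exists>\<gamma>. measurable_section G \<gamma> \<and> (\<forall>x\<in>fst ` G. \<gamma> x \<in> face (fiber G x) e)" for e
    using fiberwise_face_section_exists[OF hit cfib, of e]
      measurable_section_fiberwise_face_imp[OF cfib]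
      measurable_section_fiberwise_face_in_face[OF cfib] by metis
  obtain \<gamma>max where
    max: "measurable_section G \<gamma>max" "\<And>x. x \<in> fst ` G \<Longrightarrow> \<gamma>max x \<in> face (fiber G x) c"
    using face_section[of c] by blast
  obtain \<gamma>min where
    min: "measurable_section G \<gamma>min" "\<And>x. x \<in> fst ` G \<Longrightarrow> \<gamma>min x \<in> face (fiber G x) (- c)"
    using face_section[of "- c"] by blast
  have between: "c \<bullet> \<gamma>min x \<le> c \<bullet> y \<and> c \<bullet> y \<le> c \<bullet> \<gamma>max x" if "x \<in> fst ` G" "y \<in> fiber G x" for x y
    using face_maximizes[OF fiber_compact max(2)[OF that(1)] that(2)]
      face_maximizes[OF fiber_compact min(2)[OF that(1)] that(2)] by simp
  have "(LINT x:fst ` G|lborel. \<gamma>min x) \<in> fiber_body G"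
    "(LINT x:fst ` G|lborel. \<gamma>max x) \<in> fiber_body G"
    using max(1) min(1) by (auto simp: fiber_body_def)
  then have "(LINT x:fst ` G|lborel. \<gamma>min x) = (LINT x:fst ` G|lborel. \<gamma>max x)"
    using assms by auto
  moreover have "c \<bullet> \<gamma>min x \<le> c \<bullet> \<gamma>max x" if "x \<in> fst ` G" for x
    using between[OF that] min(1) that by (auto simp: measurable_section_def)
  ultimately have "AE x in lborel. x \<in> fst ` G \<longrightarrow> c \<bullet> \<gamma>min x = c \<bullet> \<gamma>max x"
    using max(1) min(1) by (intro AE_inner_eq_if_integral_eq[OF bounded fst_borel]) auto
  then show ?thesis
    by (rule eventually_mono) (metis between order_antisym)
qed

lemma AE_fiber_singleton_if_fiber_body_singleton:
  assumes "\<exists>z. fiber_body G = {z}"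
  shows "AE x in lborel. x \<in> fst ` G \<longrightarrow> (\<exists>y. fiber G x = {y})"
proof -
  have "AE x in lborel. \<forall>b\<in>Basis. x \<in> fst ` G \<longrightarrow>
      (\<forall>y\<in>fiber G x. \<forall>y'\<in>fiber G x. b \<bullet> y = b \<bullet> y')"
    using assms AE_inner_constant_on_fibers by (intro eventually_ball_finite finite_Basis) blast
  then show ?thesis
  proof (rule eventually_mono, intro impI)
    fix x assume coords: "\<forall>b\<in>Basis. x \<in> fst ` G \<longrightarrow> (\<forall>y\<in>fiber G x. \<forall>y'\<in>fiber G x. b \<bullet> y = b \<bullet> y')"
      and x: "x \<in> fst ` G"
    obtain y where y: "y \<in> fiber G x"
      using x by (force simp: fiber_def)
    moreover have "y' = y" if "y' \<in> fiber G x" for y'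
    proof (rule euclidean_eqI)
      fix b :: 'w assume "b \<in> Basis"
      then have "b \<bullet> y' = b \<bullet> y"
        using coords x y that by blast
      then show "y' \<bullet> b = y \<bullet> b"
        by (simp add: inner_commute)
    qed
    ultimately show "\<exists>y. fiber G x = {y}"
      by blast
  qed
qed

lemma fiber_body_singleton_if_AE_fiber_singleton:
  assumes "AE x in lborel. x \<in> fst ` G \<longrightarrow> (\<exists>y. fiber G x = {y})"
  shows "\<exists>z. fiber_body G = {z}"
proof -
  have unique: "z = z'" if zs: "z \<in> fiber_body G" "z' \<in> fiber_body G" for z z'
  proof -
    obtain \<gamma> \<gamma>' where s: "measurable_section G \<gamma>" "measurable_section G \<gamma>'"
      and z: "z = (LINT x:fst ` G|lborel. \<gamma> x)" "z' = (LINT x:fst ` G|lborel. \<gamma>' x)"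
      using zs by (auto simp: fiber_body_def)
    have ae: "AE x in lborel. x \<in> fst ` G \<longrightarrow> \<gamma> x = \<gamma>' x"
      using assms
    proof (rule eventually_mono, intro impI)
      fix x assume "x \<in> fst ` G \<longrightarrow> (\<exists>y. fiber G x = {y})" "x \<in> fst ` G"
      moreover have "\<gamma> x \<in> fiber G x" "\<gamma>' x \<in> fiber G x"
        using s \<open>x \<in> fst ` G\<close> by (auto simp: measurable_section_def)
      ultimately show "\<gamma> x = \<gamma>' x"
        by auto
    qed
    show ?thesis
      unfolding z by (rule integral_section_cong_AE[OF bounded fst_borel s ae])
  qed
  obtain z where "z \<in> fiber_body G"
    using fiber_body_nonempty[OF hit cfib] by blast
  then have "fiber_body G = {z}"
    using unique by blast
  then show ?thesis ..
qed

lemma fiber_body_singleton_iff: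
  "(\<exists>z. fiber_body G = {z}) \<longleftrightarrow> (AE x in lborel. x \<in> fst ` G \<longrightarrow> (\<exists>y. fiber G x = {y}))"
  using AE_fiber_singleton_if_fiber_body_singleton fiber_body_singleton_if_AE_fiber_singleton
  by blast

end

theorem mainTheorem7:
  fixes K :: "('v::euclidean_space \<times> 'w::euclidean_space) set" and u :: 'w
  assumes "convex_body K"
  shows "strictly_convex_in_direction (fiber_body K) u \<longleftrightarrow>
         (AE x in lborel. x \<in> fst ` K \<longrightarrow> strictly_convex_in_direction (fiber K x) u)"
proof -
  let ?F = "fiberwise_face K u"
  have "compact K"
    using assms by (simp add: convex_body_def)
  then have K: "bounded K" "fst ` K \<in> sets borel" "hit_measurable K" "compact_fibers K"
    by (simp_all add: compact_imp_bounded sets_borel_fst_compact hit_measurable_compact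
        compact_fibers_compact)
  have "bounded ?F"
    using K(1) fiberwise_face_subset by (rule bounded_subset)
  moreover have "hit_measurable ?F" "compact_fibers ?F"
    using K(3,4) by (simp_all add: hit_measurable_fiberwise_face compact_fibers_fiberwise_face)
  ultimately have "(\<exists>z. fiber_body ?F = {z}) \<longleftrightarrow>
      (AE x in lborel. x \<in> fst ` K \<longrightarrow> (\<exists>y. face (fiber K x) u = {y}))"
    using fiber_body_singleton_iff[of ?F] K(2) fst_fiberwise_face[OF K(4)] by simp
  then show ?thesis
    unfolding strictly_convex_in_direction_def face_fiber_body[OF K] .
qed

end
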